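(* Let $\Gamma$, $\omega$, $(\mathbb G,E)$ be as below with $\omega$ satisfying (C1) for every $f\in\Gamma$. Let $f\in\langle\Gamma\rangle$ have arity $n$ and let $x\in\mathrm{Range}_n(\mathbb G^* )\cap[\mathrm{dom} f]^m$. (a) $f^m(\mathbf g(x))=f^m(x)$ for every $\mathbf g\in\mathbb G$. (b) If in addition $\omega$ satisfies (C2) for every $f\in\Gamma$, then there exists a probability distribution $\lambda$ on $\mathbb G^*$, independent of $f$ and $x$, such that $f^\lambda_{i'}(x)=f^\lambda_{i''}(x)$ for all $i',i''\in[m]$, where $f^\lambda_i(x)=\sum_{\mathbf g\in\mathbb G^*}\lambda_{\mathbf g}f(g_i(x))$ and $g_i(x)$ denotes the $i$-th labeling of $\mathbf g(x)$.
   Context: $D$ finite, $m\ge2$, $\Gamma$ a finite set of cost functions $f:D^n\to\mathbb Q\cup\{\infty\}$, $\mathrm{dom} f=\{x:f(x)<\infty\}$. $\langle\Gamma\rangle$ (expressive power) is the set of functions $f(x_1,\dots,x_k)=\min_{x_{k+1},\dots,x_N}f_{\mathcal I}(x_1,\dots,x_N)$ for instances $\mathcal I$ of $\mathrm{VCSP}(\Gamma)$ on variables $x_1,\dots,x_N$, where $f_{\mathcal I}$ is a finite sum of functions of $\Gamma$ applied to tuples of these variables. $\mathcal O^{(m\to m)}$: maps $\mathbf g=(g_1,\dots,g_m):D^m\to D^m$, $\mathbb 1$ the identity. For $x=(x^1,\dots,x^m)\in[D^n]^m$, $\mathbf g(x)=(g_1(x),\dots,g_m(x))$ with $g_i$ applied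 coordinatewise; $f^m(x)=\frac1m\sum_i f(x^i)$; $x_{-i}\in[D^n]^{m-1}$ is $x$ with $x^i$ removed and $f^{m-1}(x_{-i})=\frac1{m-1}\sum_{j\ne i}f(x^j)$. $\omega$ is a finitely supported probability distribution, each $s\in\mathrm{supp}(\omega)$ associated with $\mathbb 1^s=(\mathbb 1^s_1,\dots,\mathbb 1^s_m)\in\mathcal O^{(m\to m)}$. (C1): $\sum_s\omega(s)f^m(\mathbb 1^s(x))\le f^m(x)$ for all $x\in[\mathrm{dom} f]^m$. (C2): $\sum_s\omega(s)f(\mathbb 1^s_i(x))\le f^{m-1}(x_{-i})$ for all $x\in[\mathrm{dom} f]^m$, $i\in[m]$. $\mathbf g^s=\mathbb 1^s\circ\mathbf g$; $\mathbb G=\{\mathbb 1^{s_k}\circ\dots\circ\mathbb 1^{s_1}:k\ge0\}$; $E=\{(\mathbf g,\mathbf g^s):\mathbf g\in\mathbb G,s\in\mathrm{supp}(\omega)\}$; $\mathbb G^*$ is the union of strongly connected components of $(\mathbb G,E)$ with no outgoing edges; $\mathrm{Range}_n(\mathbb G^* )=\{\mathbf g^*(y):\mathbf g^*\in\mathbb G^*,y\in[D^n]^m\}$. *)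

theory Defs
  imports "HOL-Probability.Probability_Mass_Function" "HOL-Library.Extended_Real"
begin

text \<open>Domain D is a finite type 'a; the index set [m] is a finite type 'm with CARD('m) = m.
  A cost function of arity n is a pair (n, f) with f :: 'a list \<Rightarrow> ereal, only its
  values on lists of length n being relevant; values lie in Q \<union> {\<infinity>}.\<close>

type_synonym 'a cost = "nat \<times> ('a list \<Rightarrow> ereal)"

definition valued_Q_inf :: "'a cost \<Rightarrow> bool" where
  "valued_Q_inf c \<longleftrightarrow>
     (\<forall>v. length v = fst c \<longrightarrow> snd c v \<in> range (\<lambda>q. ereal (real_of_rat q)) \<union> {\<infinity>})"

definition is_instance :: "'a cost set \<Rightarrow> nat \<Rightarrow> ('a cost \<times> nat list) list \<Rightarrow> bool" where
  "is_instance \<Gamma> N I \<longleftrightarrow>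
     (\<forall>(c, sc) \<in> set I. c \<in> \<Gamma> \<and> length sc = fst c \<and> (\<forall>j \<in> set sc. j < N))"

definition inst_fun :: "('a cost \<times> nat list) list \<Rightarrow> 'a list \<Rightarrow> ereal" where
  "inst_fun I v = (\<Sum>(c, sc) \<leftarrow> I. snd c (map (\<lambda>j. v ! j) sc))"

definition expressible :: "'a cost set \<Rightarrow> nat \<Rightarrow> ('a list \<Rightarrow> ereal) \<Rightarrow> bool" where
  "expressible \<Gamma> n f \<longleftrightarrow>
     (\<exists>N I. n \<le> N \<and> is_instance \<Gamma> N I \<and>
        (\<forall>x. length x = n \<longrightarrow>
           f x = (INF y \<in> {y. length y = N - n}. inst_fun I (x @ y))))"

definition app :: "nat \<Rightarrow> (('m \<Rightarrow> 'a) \<Rightarrow> ('m \<Rightarrow> 'a)) \<Rightarrow> ('m \<Rightarrow> 'a list) \<Rightarrow> ('m \<Rightarrow> 'a list)" where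
  "app n g x = (\<lambda>i. map (\<lambda>j. g (\<lambda>i'. x i' ! j) i) [0..<n])"

definition tuples :: "nat \<Rightarrow> ('m \<Rightarrow> 'a list) \<Rightarrow> bool" where
  "tuples n x \<longleftrightarrow> (\<forall>i. length (x i) = n)"

definition in_dom_m :: "nat \<Rightarrow> ('a list \<Rightarrow> ereal) \<Rightarrow> ('m \<Rightarrow> 'a list) \<Rightarrow> bool" where
  "in_dom_m n f x \<longleftrightarrow> (\<forall>i. length (x i) = n \<and> f (x i) < \<infinity>)"

definition fm :: "('a list \<Rightarrow> ereal) \<Rightarrow> ('m::finite \<Rightarrow> 'a list) \<Rightarrow> ereal" where
  "fm f x = ereal (1 / real CARD('m)) * (\<Sum>i\<in>UNIV. f (x i))"

definition fm1 :: "('a list \<Rightarrow> ereal) \<Rightarrow> 'm::finite \<Rightarrow> ('m \<Rightarrow> 'a list) \<Rightarrow> ereal" where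
  "fm1 f i x = ereal (1 / real (CARD('m) - 1)) * (\<Sum>j\<in>UNIV - {i}. f (x j))"

definition C1 :: "'s pmf \<Rightarrow> ('s \<Rightarrow> ('m::finite \<Rightarrow> 'a) \<Rightarrow> ('m \<Rightarrow> 'a)) \<Rightarrow> 'a cost \<Rightarrow> bool" where
  "C1 \<omega> op c \<longleftrightarrow> (\<forall>x. in_dom_m (fst c) (snd c) x \<longrightarrow>
     (\<Sum>s\<in>set_pmf \<omega>. ereal (pmf \<omega> s) * fm (snd c) (app (fst c) (op s) x)) \<le> fm (snd c) x)"

definition C2 :: "'s pmf \<Rightarrow> ('s \<Rightarrow> ('m::finite \<Rightarrow> 'a) \<Rightarrow> ('m \<Rightarrow> 'a)) \<Rightarrow> 'a cost \<Rightarrow> bool" where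
  "C2 \<omega> op c \<longleftrightarrow> (\<forall>x i. in_dom_m (fst c) (snd c) x \<longrightarrow>
     (\<Sum>s\<in>set_pmf \<omega>. ereal (pmf \<omega> s) * snd c (app (fst c) (op s) x i)) \<le> fm1 (snd c) i x)"

inductive_set Gset :: "'s pmf \<Rightarrow> ('s \<Rightarrow> ('m \<Rightarrow> 'a) \<Rightarrow> ('m \<Rightarrow> 'a)) \<Rightarrow> (('m \<Rightarrow> 'a) \<Rightarrow> ('m \<Rightarrow> 'a)) set"
  for \<omega> op where
  id_in: "id \<in> Gset \<omega> op"
| step: "g \<in> Gset \<omega> op \<Longrightarrow> s \<in> set_pmf \<omega> \<Longrightarrow> op s \<circ> g \<in> Gset \<omega> op"

definition Eset :: "'s pmf \<Rightarrow> ('s \<Rightarrow> ('m \<Rightarrow> 'a) \<Rightarrow> ('m \<Rightarrow> 'a))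
    \<Rightarrow> ((('m \<Rightarrow> 'a) \<Rightarrow> ('m \<Rightarrow> 'a)) \<times> (('m \<Rightarrow> 'a) \<Rightarrow> ('m \<Rightarrow> 'a))) set" where
  "Eset \<omega> op = {(g, op s \<circ> g) | g s. g \<in> Gset \<omega> op \<and> s \<in> set_pmf \<omega>}"

definition is_SCC :: "'v set \<Rightarrow> ('v \<times> 'v) set \<Rightarrow> 'v set \<Rightarrow> bool" where
  "is_SCC V E C \<longleftrightarrow> C \<noteq> {} \<and> C \<subseteq> V \<and> (\<forall>u\<in>C. \<forall>v\<in>C. (u, v) \<in> E\<^sup>*) \<and>
     (\<forall>u\<in>C. \<forall>v\<in>V. (u, v) \<in> E\<^sup>* \<and> (v, u) \<in> E\<^sup>* \<longrightarrow> v \<in> C)"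

definition Gstar :: "'s pmf \<Rightarrow> ('s \<Rightarrow> ('m \<Rightarrow> 'a) \<Rightarrow> ('m \<Rightarrow> 'a)) \<Rightarrow> (('m \<Rightarrow> 'a) \<Rightarrow> ('m \<Rightarrow> 'a)) set" where
  "Gstar \<omega> op = \<Union>{C. is_SCC (Gset \<omega> op) (Eset \<omega> op) C \<and>
                      (\<forall>(u, v) \<in> Eset \<omega> op. u \<in> C \<longrightarrow> v \<in> C)}"

definition Range_n :: "nat \<Rightarrow> (('m \<Rightarrow> 'a) \<Rightarrow> ('m \<Rightarrow> 'a)) set \<Rightarrow> ('m \<Rightarrow> 'a list) set" where
  "Range_n n GS = {app n g y | g y. g \<in> GS \<and> tuples n y}"

definition f_lambda :: "(('m \<Rightarrow> 'a) \<Rightarrow> ('m \<Rightarrow> 'a)) pmf \<Rightarrow> (('m \<Rightarrow> 'a) \<Rightarrow> ('m \<Rightarrow> 'a)) set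
    \<Rightarrow> nat \<Rightarrow> ('a list \<Rightarrow> ereal) \<Rightarrow> 'm \<Rightarrow> ('m \<Rightarrow> 'a list) \<Rightarrow> ereal" where
  "f_lambda lam GS n f i x = (\<Sum>g\<in>GS. ereal (pmf lam g) * f (app n g x i))"

end

theory Submission
  imports Defs "HOL-Analysis.Analysis"
begin

text \<open>Under (C1) the total cost \<open>\<Sum>\<^sub>i f(x\<^sup>i)\<close> is a supermartingale for the random walk
  \<open>x \<mapsto> \<one>\<^sup>s(x)\<close>. In real-valued form this survives sums of constraints and minimisation over
  auxiliary variables, so it holds for every \<open>f \<in> \<langle>\<Gamma>\<rangle>\<close>. By the minimum principle a
  supermartingale is constant on a sink component of \<open>(\<G>, E)\<close>, which gives (a). For (b) let
  \<open>\<lambda>\<close> be a stationary distribution of the walk \<open>g \<mapsto> \<one>\<^sup>s \<circ> g\<close> on \<open>\<G>\<^sup>*\<close> (Brouwer);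
  then (C2) bounds each labelwise average \<open>f\<^sup>\<lambda>\<^sub>i\<close> by the mean of the others, forcing
  them all to be equal.\<close>

lemma app_comp: "app n g (app n h y) = app n (g \<circ> h) y"
  by (auto simp: app_def fun_eq_iff)

lemma length_app [simp]: "length (app n g z i) = n"
  by (simp add: app_def)

lemma nth_app [simp]: "j < n \<Longrightarrow> app n g z i ! j = g (\<lambda>i'. z i' ! j) i"
  by (simp add: app_def)

lemma app_id: "(\<And>i. length (x i) = n) \<Longrightarrow> app n id x = x"
  by (auto simp: app_def fun_eq_iff intro: nth_equalityI)

lemma map_nth_app:
  assumes "\<forall>j\<in>set sc. j < N"
  shows "map (\<lambda>j. app N g z i ! j) sc = app (length sc) g (\<lambda>i. map (\<lambda>j. z i ! j) sc) i"
  using assms by (auto intro: nth_equalityI)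

lemma app_append:
  assumes "\<And>i. length (z i) = n" "\<And>i. length (y i) = N - n" "n \<le> N"
  shows "app N g (\<lambda>i. z i @ y i) i = app n g z i @ app (N - n) g y i"
  using assms by (auto simp: nth_append intro: nth_equalityI)

lemma ereal_real_of_ereal_finite: "(a::ereal) \<noteq> -\<infinity> \<Longrightarrow> a < \<infinity> \<Longrightarrow> ereal (real_of_ereal a) = a"
  by (cases a) auto

lemma real_of_ereal_add_finite:
  "(a::ereal) \<noteq> -\<infinity> \<Longrightarrow> b \<noteq> -\<infinity> \<Longrightarrow> a < \<infinity> \<Longrightarrow> b < \<infinity> \<Longrightarrow>
   real_of_ereal (a + b) = real_of_ereal a + real_of_ereal b"
  by (cases a; cases b) auto

lemma ereal_mult_real_of_ereal_finite:
  "(a::ereal) \<noteq> -\<infinity> \<Longrightarrow> a < \<infinity> \<Longrightarrow> ereal (p * real_of_ereal a) = ereal p * a"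
  by (cases a) auto

lemma real_of_ereal_mono_finite:
  "(a::ereal) \<le> b \<Longrightarrow> a \<noteq> -\<infinity> \<Longrightarrow> b < \<infinity> \<Longrightarrow> real_of_ereal a \<le> real_of_ereal b"
  by (cases a; cases b) auto

section \<open>Real-valued forms of (C1) and (C2)\<close>

definition no_minf_on :: "nat \<Rightarrow> ('a list \<Rightarrow> ereal) \<Rightarrow> bool" where
  "no_minf_on k F \<longleftrightarrow> (\<forall>v. length v = k \<longrightarrow> F v \<noteq> -\<infinity>)"

definition real_sum :: "('a list \<Rightarrow> ereal) \<Rightarrow> ('m::finite \<Rightarrow> 'a list) \<Rightarrow> real" where
  "real_sum F z = (\<Sum>i\<in>UNIV. real_of_ereal (F (z i)))"

definition real_mean_others :: "('a list \<Rightarrow> ereal) \<Rightarrow> ('m::finite \<Rightarrow> 'a list) \<Rightarrow> 'm \<Rightarrow> real" where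
  "real_mean_others F z i = (\<Sum>j\<in>UNIV - {i}. real_of_ereal (F (z j))) / real (CARD('m) - 1)"

definition dom_closed :: "'s pmf \<Rightarrow> ('s \<Rightarrow> ('m \<Rightarrow> 'a) \<Rightarrow> ('m \<Rightarrow> 'a)) \<Rightarrow> nat \<Rightarrow> ('a list \<Rightarrow> ereal) \<Rightarrow> bool"
  where "dom_closed \<omega> op k F \<longleftrightarrow>
    (\<forall>z s. in_dom_m k F z \<longrightarrow> s \<in> set_pmf \<omega> \<longrightarrow> in_dom_m k F (app k (op s) z))"

text \<open>Unlike (C1), \<open>real_C1\<close> is inherited by sums of cost functions and by minimisation over
  auxiliary variables; this is why it also records the absence of \<open>-\<infinity>\<close> and the closure of
  the domain under every \<open>op s\<close>.\<close>

definition real_C1 :: "'s pmf \<Rightarrow> ('s \<Rightarrow> ('m::finite \<Rightarrow> 'a) \<Rightarrow> ('m \<Rightarrow> 'a)) \<Rightarrow> nat \<Rightarrow> ('a list \<Rightarrow> ereal) \<Rightarrow> bool"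
  where "real_C1 \<omega> op k F \<longleftrightarrow> no_minf_on k F \<and> dom_closed \<omega> op k F \<and>
    (\<forall>z. in_dom_m k F z \<longrightarrow>
       (\<Sum>s\<in>set_pmf \<omega>. pmf \<omega> s * real_sum F (app k (op s) z)) \<le> real_sum F z)"

definition real_C2 :: "'s pmf \<Rightarrow> ('s \<Rightarrow> ('m::finite \<Rightarrow> 'a) \<Rightarrow> ('m \<Rightarrow> 'a)) \<Rightarrow> nat \<Rightarrow> ('a list \<Rightarrow> ereal) \<Rightarrow> bool"
  where "real_C2 \<omega> op k F \<longleftrightarrow>
    (\<forall>z i. in_dom_m k F z \<longrightarrow>
       (\<Sum>s\<in>set_pmf \<omega>. pmf \<omega> s * real_of_ereal (F (app k (op s) z i))) \<le> real_mean_others F z i)"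

lemma in_dom_m_add:
  assumes "no_minf_on k F" "no_minf_on k G"
  shows "in_dom_m k (\<lambda>v. F v + G v) z \<longleftrightarrow> in_dom_m k F z \<and> in_dom_m k G z"
proof -
  have "(a + b < \<infinity>) \<longleftrightarrow> a < \<infinity> \<and> b < \<infinity>" if "a \<noteq> -\<infinity>" "b \<noteq> -\<infinity>" for a b :: ereal
    using that by (cases a; cases b) auto
  then show ?thesis using assms by (auto simp: in_dom_m_def no_minf_on_def)
qed

lemma no_minf_on_add: "no_minf_on k F \<Longrightarrow> no_minf_on k G \<Longrightarrow> no_minf_on k (\<lambda>v. F v + G v)"
  unfolding no_minf_on_def by (metis ereal_plus_eq_MInfty)

lemma dom_closed_add:
  "no_minf_on k F \<Longrightarrow> no_minf_on k G \<Longrightarrow> dom_closed \<omega> op k F \<Longrightarrow> dom_closed \<omega> op k G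
    \<Longrightarrow> dom_closed \<omega> op k (\<lambda>v. F v + G v)"
  by (simp add: dom_closed_def in_dom_m_add)

lemma real_of_ereal_add_on_dom:
  assumes "no_minf_on k F" "no_minf_on k G" "in_dom_m k F w" "in_dom_m k G w"
  shows "real_of_ereal (F (w i) + G (w i)) = real_of_ereal (F (w i)) + real_of_ereal (G (w i))"
  using assms by (auto simp: in_dom_m_def no_minf_on_def real_of_ereal_add_finite)

lemma real_sum_add:
  assumes "no_minf_on k F" "no_minf_on k G" "in_dom_m k F w" "in_dom_m k G w"
  shows "real_sum (\<lambda>v. F v + G v) w = real_sum F w + real_sum G w"
  using real_of_ereal_add_on_dom[OF assms] by (simp add: real_sum_def sum.distrib)

lemma real_mean_others_add:
  assumes "no_minf_on k F" "no_minf_on k G" "in_dom_m k F w" "in_dom_m k G w"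
  shows "real_mean_others (\<lambda>v. F v + G v) w i = real_mean_others F w i + real_mean_others G w i"
  using real_of_ereal_add_on_dom[OF assms]
  by (simp add: real_mean_others_def sum.distrib add_divide_distrib)

lemma real_C1_zero: "real_C1 \<omega> op k (\<lambda>_. 0)"
  by (simp add: real_C1_def no_minf_on_def dom_closed_def in_dom_m_def real_sum_def)

lemma real_C2_zero: "real_C2 \<omega> op k (\<lambda>_. 0)"
  by (simp add: real_C2_def real_mean_others_def)

lemma real_C1_add:
  assumes F: "real_C1 \<omega> op k F" and G: "real_C1 \<omega> op k G"
  shows "real_C1 \<omega> op k (\<lambda>v. F v + G v)"
proof -
  have nm: "no_minf_on k F" "no_minf_on k G" and cl: "dom_closed \<omega> op k F" "dom_closed \<omega> op k G"
    using F G by (auto simp: real_C1_def)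
  have "(\<Sum>s\<in>set_pmf \<omega>. pmf \<omega> s * real_sum (\<lambda>v. F v + G v) (app k (op s) z))
      \<le> real_sum (\<lambda>v. F v + G v) z" if "in_dom_m k (\<lambda>v. F v + G v) z" for z
  proof -
    have dF: "in_dom_m k F z" and dG: "in_dom_m k G z" using that in_dom_m_add[OF nm] by auto
    have "(\<Sum>s\<in>set_pmf \<omega>. pmf \<omega> s * real_sum (\<lambda>v. F v + G v) (app k (op s) z))
        = (\<Sum>s\<in>set_pmf \<omega>. pmf \<omega> s * real_sum F (app k (op s) z))
          + (\<Sum>s\<in>set_pmf \<omega>. pmf \<omega> s * real_sum G (app k (op s) z))"
      unfolding sum.distrib[symmetric] using cl dF dG
      by (intro sum.cong) (auto simp: dom_closed_def real_sum_add[OF nm] distrib_left)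
    also have "\<dots> \<le> real_sum F z + real_sum G z"
      using F G dF dG by (intro add_mono) (auto simp: real_C1_def)
    also have "\<dots> = real_sum (\<lambda>v. F v + G v) z"
      using real_sum_add[OF nm dF dG] by simp
    finally show ?thesis .
  qed
  then show ?thesis using nm cl by (simp add: real_C1_def no_minf_on_add dom_closed_add)
qed

lemma real_C2_add:
  fixes op :: "'s \<Rightarrow> ('m::finite \<Rightarrow> 'a) \<Rightarrow> ('m \<Rightarrow> 'a)"
  assumes F: "real_C1 \<omega> op k F" "real_C2 \<omega> op k F" and G: "real_C1 \<omega> op k G" "real_C2 \<omega> op k G"
  shows "real_C2 \<omega> op k (\<lambda>v. F v + G v)"
  unfolding real_C2_def
proof (intro allI impI)
  fix z :: "'m \<Rightarrow> 'a list" and i assume "in_dom_m k (\<lambda>v. F v + G v) z"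
  have nm: "no_minf_on k F" "no_minf_on k G" and cl: "dom_closed \<omega> op k F" "dom_closed \<omega> op k G"
    using F G by (auto simp: real_C1_def)
  have dF: "in_dom_m k F z" and dG: "in_dom_m k G z"
    using \<open>in_dom_m k (\<lambda>v. F v + G v) z\<close> in_dom_m_add[OF nm] by auto
  have "(\<Sum>s\<in>set_pmf \<omega>. pmf \<omega> s * real_of_ereal (F (app k (op s) z i) + G (app k (op s) z i)))
      = (\<Sum>s\<in>set_pmf \<omega>. pmf \<omega> s * real_of_ereal (F (app k (op s) z i)))
        + (\<Sum>s\<in>set_pmf \<omega>. pmf \<omega> s * real_of_ereal (G (app k (op s) z i)))"
    unfolding sum.distrib[symmetric] using cl dF dG
    by (intro sum.cong) (auto simp: dom_closed_def real_of_ereal_add_on_dom[OF nm] distrib_left)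
  also have "\<dots> \<le> real_mean_others F z i + real_mean_others G z i"
    using F G dF dG by (intro add_mono) (auto simp: real_C2_def)
  also have "\<dots> = real_mean_others (\<lambda>v. F v + G v) z i"
    using real_mean_others_add[OF nm dF dG] by simp
  finally show "(\<Sum>s\<in>set_pmf \<omega>. pmf \<omega> s * real_of_ereal (F (app k (op s) z i) + G (app k (op s) z i)))
      \<le> real_mean_others (\<lambda>v. F v + G v) z i" .
qed

lemma real_C1_scope:
  fixes op :: "'s \<Rightarrow> ('m::finite \<Rightarrow> 'a) \<Rightarrow> ('m \<Rightarrow> 'a)"
  assumes sc: "\<forall>j\<in>set sc. j < N" and c: "real_C1 \<omega> op (length sc) c"
  shows "real_C1 \<omega> op N (\<lambda>v. c (map (\<lambda>j. v ! j) sc))" (is "real_C1 \<omega> op N ?F")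
proof -
  define restr where "restr z = (\<lambda>i. map (\<lambda>j. z i ! j) sc)" for z :: "'m \<Rightarrow> 'a list"
  have F_eq: "?F (z i) = c (restr z i)" for z i
    by (simp add: restr_def)
  have restr_app: "restr (app N g z) = app (length sc) g (restr z)" for g z
    by (simp add: restr_def fun_eq_iff map_nth_app[OF sc])
  have dom: "in_dom_m N ?F z \<longleftrightarrow> in_dom_m (length sc) c (restr z) \<and> (\<forall>i. length (z i) = N)" for z
    by (auto simp: in_dom_m_def restr_def)
  have nm: "no_minf_on N ?F"
    using c by (simp add: real_C1_def no_minf_on_def)
  have cl: "dom_closed \<omega> op N ?F"
    using c by (auto simp: real_C1_def dom_closed_def dom restr_app)
  have "(\<Sum>s\<in>set_pmf \<omega>. pmf \<omega> s * real_sum ?F (app N (op s) z)) \<le> real_sum ?F z"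
    if "in_dom_m N ?F z" for z
    using c that by (simp add: real_C1_def real_sum_def F_eq restr_app dom)
  then show ?thesis
    using nm cl by (simp add: real_C1_def)
qed

lemma real_C2_scope:
  fixes op :: "'s \<Rightarrow> ('m::finite \<Rightarrow> 'a) \<Rightarrow> ('m \<Rightarrow> 'a)"
  assumes sc: "\<forall>j\<in>set sc. j < N" and c: "real_C2 \<omega> op (length sc) c"
  shows "real_C2 \<omega> op N (\<lambda>v. c (map (\<lambda>j. v ! j) sc))" (is "real_C2 \<omega> op N ?F")
proof -
  define restr where "restr z = (\<lambda>i. map (\<lambda>j. z i ! j) sc)" for z :: "'m \<Rightarrow> 'a list"
  have F_eq: "?F (z i) = c (restr z i)" for z i
    by (simp add: restr_def)
  have restr_app: "restr (app N g z) = app (length sc) g (restr z)" for g z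
    by (simp add: restr_def fun_eq_iff map_nth_app[OF sc])
  have dom: "in_dom_m N ?F z \<Longrightarrow> in_dom_m (length sc) c (restr z)" for z
    by (auto simp: in_dom_m_def restr_def)
  show ?thesis
    using c dom by (simp add: real_C2_def real_mean_others_def F_eq restr_app)
qed

section \<open>Inheritance by expressible cost functions\<close>

lemma inst_fun_induct:
  assumes "\<forall>(c, sc)\<in>set I. length sc = fst c \<and> (\<forall>j\<in>set sc. j < N) \<and> P (fst c) (snd c)"
    and "P N (\<lambda>_. 0)"
    and "\<And>F G. P N F \<Longrightarrow> P N G \<Longrightarrow> P N (\<lambda>v. F v + G v)"
    and "\<And>c sc. \<forall>j\<in>set sc. j < N \<Longrightarrow> P (length sc) c \<Longrightarrow> P N (\<lambda>v. c (map (\<lambda>j. v ! j) sc))"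
  shows "P N (inst_fun I)"
  using assms(1)
proof (induction I)
  case Nil
  then show ?case using assms(2) by (simp add: inst_fun_def)
next
  case (Cons cs I)
  obtain c sc where cs: "cs = (c, sc)" by fastforce
  have "inst_fun (cs # I) = (\<lambda>v. snd c (map (\<lambda>j. v ! j) sc) + inst_fun I v)"
    by (simp add: inst_fun_def cs fun_eq_iff)
  then show ?case using Cons assms(3,4) unfolding cs by auto
qed

context
  fixes n N :: nat and f F :: "'a::finite list \<Rightarrow> ereal"
  assumes le_N: "n \<le> N"
    and f_eq_INF: "\<And>x. length x = n \<Longrightarrow> f x = (INF y \<in> {y. length y = N - n}. F (x @ y))"
begin

lemma INF_suffix_attained: "length x = n \<Longrightarrow> \<exists>y. length y = N - n \<and> f x = F (x @ y)"
proof -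
  assume x: "length x = n"
  let ?Y = "{y::'a list. length y = N - n}"
  have "finite ?Y" using finite_lists_length_eq[of "UNIV::'a set" "N - n"] by simp
  moreover have "?Y \<noteq> {}" by (metis (mono_tags, lifting) empty_iff length_replicate mem_Collect_eq)
  ultimately have "Inf ((\<lambda>y. F (x @ y)) ` ?Y) \<in> (\<lambda>y. F (x @ y)) ` ?Y"
    by (simp add: Min_Inf[symmetric])
  then show ?thesis using f_eq_INF[OF x] by auto
qed

lemma INF_suffix_le: "length x = n \<Longrightarrow> length y = N - n \<Longrightarrow> f x \<le> F (x @ y)"
  using f_eq_INF by (auto intro: INF_lower)

text \<open>Minimising suffixes chosen labelwise give a point of \<open>dom F\<close> that dominates \<open>z\<close> after
  applying any \<open>g\<close>, because \<open>app\<close> commutes with appending.\<close>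

lemma lift_to_minimizers:
  fixes z :: "'m \<Rightarrow> 'a list"
  assumes dz: "in_dom_m n f z"
  shows "\<exists>Z. in_dom_m N F Z \<and> (\<forall>i. F (Z i) = f (z i)) \<and> (\<forall>g i. f (app n g z i) \<le> F (app N g Z i))"
proof -
  have "\<forall>i. \<exists>y. length y = N - n \<and> f (z i) = F (z i @ y)"
    using INF_suffix_attained dz by (simp add: in_dom_m_def)
  then obtain Y where Y: "\<And>i. length (Y i) = N - n" "\<And>i. f (z i) = F (z i @ Y i)"
    by metis
  have "app N g (\<lambda>i. z i @ Y i) i = app n g z i @ app (N - n) g Y i" for g i
    using dz Y le_N by (intro app_append) (auto simp: in_dom_m_def)
  then have "f (app n g z i) \<le> F (app N g (\<lambda>i. z i @ Y i) i)" for g i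
    by (simp add: INF_suffix_le)
  moreover have "in_dom_m N F (\<lambda>i. z i @ Y i)"
    using dz Y le_N by (auto simp: in_dom_m_def)
  ultimately show ?thesis using Y(2) by (intro exI[of _ "\<lambda>i. z i @ Y i"]) auto
qed

lemma real_C1_INF_suffix:
  fixes op :: "'s \<Rightarrow> ('m::finite \<Rightarrow> 'a) \<Rightarrow> ('m \<Rightarrow> 'a)"
  assumes F: "real_C1 \<omega> op N F"
  shows "real_C1 \<omega> op n f"
proof -
  have nmF: "no_minf_on N F" and clF: "dom_closed \<omega> op N F" using F by (auto simp: real_C1_def)
  have nm: "no_minf_on n f"
    unfolding no_minf_on_def
    using INF_suffix_attained nmF le_N by (fastforce simp: no_minf_on_def)
  have step: "in_dom_m n f (app n (op s) z) \<and>
      (\<forall>i. real_of_ereal (f (app n (op s) z i)) \<le> real_of_ereal (F (app N (op s) Z i)))"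
    if "in_dom_m N F Z" "\<forall>g i. f (app n g z i) \<le> F (app N g Z i)" "s \<in> set_pmf \<omega>" for z Z s
  proof -
    have "in_dom_m N F (app N (op s) Z)" using clF that by (auto simp: dom_closed_def)
    then have F_fin: "F (app N (op s) Z i) < \<infinity>" for i by (simp add: in_dom_m_def)
    then have "f (app n (op s) z i) < \<infinity>" for i using that(2) by (meson order.strict_trans1)
    then show ?thesis using that(2) nm F_fin
      by (auto simp: in_dom_m_def no_minf_on_def intro!: real_of_ereal_mono_finite)
  qed
  have cl: "dom_closed \<omega> op n f"
    unfolding dom_closed_def using lift_to_minimizers step by blast
  have "(\<Sum>s\<in>set_pmf \<omega>. pmf \<omega> s * real_sum f (app n (op s) z)) \<le> real_sum f z"
    if dz: "in_dom_m n f z" for z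
  proof -
    obtain Z where Z: "in_dom_m N F Z" "\<forall>i. F (Z i) = f (z i)" "\<forall>g i. f (app n g z i) \<le> F (app N g Z i)"
      using lift_to_minimizers[OF dz] by blast
    have "(\<Sum>s\<in>set_pmf \<omega>. pmf \<omega> s * real_sum f (app n (op s) z))
        \<le> (\<Sum>s\<in>set_pmf \<omega>. pmf \<omega> s * real_sum F (app N (op s) Z))"
      using step[OF Z(1,3)] by (auto simp: real_sum_def intro!: sum_mono mult_left_mono)
    also have "\<dots> \<le> real_sum F Z" using F Z(1) by (simp add: real_C1_def)
    also have "\<dots> = real_sum f z" using Z(2) by (simp add: real_sum_def)
    finally show ?thesis .
  qed
  then show ?thesis using nm cl by (simp add: real_C1_def)
qed

lemma real_C2_INF_suffix:
  fixes op :: "'s \<Rightarrow> ('m::finite \<Rightarrow> 'a) \<Rightarrow> ('m \<Rightarrow> 'a)"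
  assumes F: "real_C1 \<omega> op N F" "real_C2 \<omega> op N F"
  shows "real_C2 \<omega> op n f"
  unfolding real_C2_def
proof (intro allI impI)
  fix z :: "'m \<Rightarrow> 'a list" and i assume dz: "in_dom_m n f z"
  obtain Z where Z: "in_dom_m N F Z" "\<forall>i. F (Z i) = f (z i)" "\<forall>g i. f (app n g z i) \<le> F (app N g Z i)"
    using lift_to_minimizers[OF dz] by blast
  have f: "real_C1 \<omega> op n f" using real_C1_INF_suffix[OF F(1)] .
  have "real_of_ereal (f (app n (op s) z i)) \<le> real_of_ereal (F (app N (op s) Z i))"
    if "s \<in> set_pmf \<omega>" for s
  proof (rule real_of_ereal_mono_finite)
    show "f (app n (op s) z i) \<le> F (app N (op s) Z i)" using Z(3) by blast
    show "f (app n (op s) z i) \<noteq> -\<infinity>" using f by (simp add: real_C1_def no_minf_on_def)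
    show "F (app N (op s) Z i) < \<infinity>"
      using F(1) Z(1) that by (auto simp: real_C1_def dom_closed_def in_dom_m_def)
  qed
  then have "(\<Sum>s\<in>set_pmf \<omega>. pmf \<omega> s * real_of_ereal (f (app n (op s) z i)))
      \<le> (\<Sum>s\<in>set_pmf \<omega>. pmf \<omega> s * real_of_ereal (F (app N (op s) Z i)))"
    by (intro sum_mono mult_left_mono) auto
  also have "\<dots> \<le> real_mean_others F Z i" using F(2) Z(1) by (simp add: real_C2_def)
  also have "\<dots> = real_mean_others f z i" using Z(2) by (simp add: real_mean_others_def)
  finally show "(\<Sum>s\<in>set_pmf \<omega>. pmf \<omega> s * real_of_ereal (f (app n (op s) z i))) \<le> real_mean_others f z i" .
qed

end

lemma fm_eq_real_sum:
  fixes w :: "'m::finite \<Rightarrow> 'a list"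
  assumes "in_dom_m k F w" "no_minf_on k F"
  shows "fm F w = ereal (real_sum F w / real CARD('m))"
proof -
  have "(\<Sum>i\<in>UNIV. F (w i)) = (\<Sum>i\<in>UNIV. ereal (real_of_ereal (F (w i))))"
    using assms by (intro sum.cong refl)
      (auto simp: in_dom_m_def no_minf_on_def ereal_real_of_ereal_finite)
  then have "(\<Sum>i\<in>UNIV. F (w i)) = ereal (real_sum F w)"
    by (simp only: sum_ereal real_sum_def)
  then show ?thesis by (simp add: fm_def)
qed

lemma fm1_eq_real_mean_others:
  fixes w :: "'m::finite \<Rightarrow> 'a list"
  assumes "in_dom_m k F w" "no_minf_on k F"
  shows "fm1 F i w = ereal (real_mean_others F w i)"
proof -
  have "(\<Sum>j\<in>UNIV - {i}. F (w j)) = (\<Sum>j\<in>UNIV - {i}. ereal (real_of_ereal (F (w j))))"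
    using assms by (intro sum.cong refl)
      (auto simp: in_dom_m_def no_minf_on_def ereal_real_of_ereal_finite)
  then have "(\<Sum>j\<in>UNIV - {i}. F (w j)) = ereal (\<Sum>j\<in>UNIV - {i}. real_of_ereal (F (w j)))"
    by (simp only: sum_ereal)
  then show ?thesis by (simp add: fm1_def real_mean_others_def)
qed

lemma valued_Q_inf_no_minf_on: "valued_Q_inf c \<Longrightarrow> no_minf_on (fst c) (snd c)"
  by (auto simp: valued_Q_inf_def no_minf_on_def)

text \<open>A finite left-hand side in (C1) forces every summand to be finite, since every \<open>s\<close> in the
  support has positive weight.\<close>

lemma C1_imp_dom_closed:
  fixes op :: "'s \<Rightarrow> ('m::finite \<Rightarrow> 'a) \<Rightarrow> ('m \<Rightarrow> 'a)"
  assumes fin: "finite (set_pmf \<omega>)" and nm: "no_minf_on (fst c) (snd c)" and c1: "C1 \<omega> op c"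
  shows "dom_closed \<omega> op (fst c) (snd c)"
  unfolding dom_closed_def
proof (intro allI impI)
  fix z :: "'m \<Rightarrow> 'a list" and s
  assume dz: "in_dom_m (fst c) (snd c) z" and s: "s \<in> set_pmf \<omega>"
  let ?F = "snd c" and ?z' = "app (fst c) (op s) z"
  have "(\<Sum>t\<in>set_pmf \<omega>. ereal (pmf \<omega> t) * fm ?F (app (fst c) (op t) z)) \<le> fm ?F z"
    using c1 dz by (simp add: C1_def)
  also have "fm ?F z < \<infinity>" using fm_eq_real_sum[OF dz nm] by simp
  finally have "ereal (pmf \<omega> s) * fm ?F ?z' \<noteq> \<infinity>"
    using s fin by (simp add: sum_Pinfty)
  then have "fm ?F ?z' \<noteq> \<infinity>"
    using s by (simp add: pmf_positive)
  then have "(\<Sum>i\<in>UNIV. ?F (?z' i)) \<noteq> \<infinity>"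
    by (simp add: fm_def)
  then show "in_dom_m (fst c) ?F ?z'"
    by (simp add: in_dom_m_def sum_Pinfty less_top)
qed

lemma C1_imp_real_C1:
  fixes op :: "'s \<Rightarrow> ('m::finite \<Rightarrow> 'a) \<Rightarrow> ('m \<Rightarrow> 'a)"
  assumes fin: "finite (set_pmf \<omega>)" and nm: "no_minf_on (fst c) (snd c)" and c1: "C1 \<omega> op c"
  shows "real_C1 \<omega> op (fst c) (snd c)"
proof -
  have cl: "dom_closed \<omega> op (fst c) (snd c)" using C1_imp_dom_closed[OF assms] .
  have "(\<Sum>s\<in>set_pmf \<omega>. pmf \<omega> s * real_sum (snd c) (app (fst c) (op s) z)) \<le> real_sum (snd c) z"
    if dz: "in_dom_m (fst c) (snd c) z" for z :: "'m \<Rightarrow> 'a list"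
  proof -
    have "(\<Sum>s\<in>set_pmf \<omega>. ereal (pmf \<omega> s) * fm (snd c) (app (fst c) (op s) z))
        = ereal ((\<Sum>s\<in>set_pmf \<omega>. pmf \<omega> s * real_sum (snd c) (app (fst c) (op s) z)) / real CARD('m))"
      using cl dz by (auto simp: dom_closed_def fm_eq_real_sum[OF _ nm] sum_divide_distrib
          intro!: sum.cong)
    moreover have "(\<Sum>s\<in>set_pmf \<omega>. ereal (pmf \<omega> s) * fm (snd c) (app (fst c) (op s) z)) \<le> fm (snd c) z"
      using c1 dz by (simp add: C1_def)
    ultimately show ?thesis
      using fm_eq_real_sum[OF dz nm] by (simp add: divide_le_cancel)
  qed
  then show ?thesis using nm cl by (simp add: real_C1_def)
qed

lemma C2_imp_real_C2:
  fixes op :: "'s \<Rightarrow> ('m::finite \<Rightarrow> 'a) \<Rightarrow> ('m \<Rightarrow> 'a)"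
  assumes c: "real_C1 \<omega> op (fst c) (snd c)" and c2: "C2 \<omega> op c"
  shows "real_C2 \<omega> op (fst c) (snd c)"
  unfolding real_C2_def
proof (intro allI impI)
  fix z :: "'m \<Rightarrow> 'a list" and i assume dz: "in_dom_m (fst c) (snd c) z"
  have nm: "no_minf_on (fst c) (snd c)" and cl: "dom_closed \<omega> op (fst c) (snd c)"
    using c by (auto simp: real_C1_def)
  have "ereal (pmf \<omega> s * real_of_ereal (snd c (app (fst c) (op s) z i)))
      = ereal (pmf \<omega> s) * snd c (app (fst c) (op s) z i)" if "s \<in> set_pmf \<omega>" for s
    using cl dz nm that
    by (auto simp: dom_closed_def in_dom_m_def no_minf_on_def ereal_mult_real_of_ereal_finite)
  then have "(\<Sum>s\<in>set_pmf \<omega>. ereal (pmf \<omega> s) * snd c (app (fst c) (op s) z i))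
      = ereal (\<Sum>s\<in>set_pmf \<omega>. pmf \<omega> s * real_of_ereal (snd c (app (fst c) (op s) z i)))"
    by (simp add: sum_ereal[symmetric] del: sum_ereal)
  moreover have "(\<Sum>s\<in>set_pmf \<omega>. ereal (pmf \<omega> s) * snd c (app (fst c) (op s) z i)) \<le> fm1 (snd c) i z"
    using c2 dz by (simp add: C2_def)
  ultimately show "(\<Sum>s\<in>set_pmf \<omega>. pmf \<omega> s * real_of_ereal (snd c (app (fst c) (op s) z i)))
      \<le> real_mean_others (snd c) z i"
    using fm1_eq_real_mean_others[OF dz nm] by simp
qed

lemma expressible_real_C1:
  fixes op :: "'s \<Rightarrow> ('m::finite \<Rightarrow> 'a::finite) \<Rightarrow> ('m \<Rightarrow> 'a)"
  assumes "finite (set_pmf \<omega>)" "\<forall>c\<in>\<Gamma>. valued_Q_inf c" "\<forall>c\<in>\<Gamma>. C1 \<omega> op c"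
    and "expressible \<Gamma> n f"
  shows "real_C1 \<omega> op n f"
proof -
  obtain N I where le_N: "n \<le> N" and I: "is_instance \<Gamma> N I"
    and f_eq: "\<forall>x. length x = n \<longrightarrow> f x = (INF y \<in> {y. length y = N - n}. inst_fun I (x @ y))"
    using assms(4) unfolding expressible_def by blast
  have "real_C1 \<omega> op (fst c) (snd c)" if "c \<in> \<Gamma>" for c
    using that assms(1-3) by (blast intro: C1_imp_real_C1 valued_Q_inf_no_minf_on)
  then have "\<forall>(c, sc)\<in>set I. length sc = fst c \<and> (\<forall>j\<in>set sc. j < N) \<and> real_C1 \<omega> op (fst c) (snd c)"
    using I unfolding is_instance_def by fast
  then have "real_C1 \<omega> op N (inst_fun I)"
    using inst_fun_induct[where P = "real_C1 \<omega> op"] real_C1_zero real_C1_add real_C1_scope by blast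
  then show ?thesis using real_C1_INF_suffix[OF le_N] f_eq by blast
qed

lemma expressible_real_C2:
  fixes op :: "'s \<Rightarrow> ('m::finite \<Rightarrow> 'a::finite) \<Rightarrow> ('m \<Rightarrow> 'a)"
  assumes "finite (set_pmf \<omega>)" "\<forall>c\<in>\<Gamma>. valued_Q_inf c" "\<forall>c\<in>\<Gamma>. C1 \<omega> op c" "\<forall>c\<in>\<Gamma>. C2 \<omega> op c"
    and "expressible \<Gamma> n f"
  shows "real_C2 \<omega> op n f"
proof -
  obtain N I where le_N: "n \<le> N" and I: "is_instance \<Gamma> N I"
    and f_eq: "\<forall>x. length x = n \<longrightarrow> f x = (INF y \<in> {y. length y = N - n}. inst_fun I (x @ y))"
    using assms(5) unfolding expressible_def by blast
  have "real_C1 \<omega> op (fst c) (snd c) \<and> real_C2 \<omega> op (fst c) (snd c)" if "c \<in> \<Gamma>" for c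
    using that assms(1-4) by (blast intro: C1_imp_real_C1 C2_imp_real_C2 valued_Q_inf_no_minf_on)
  then have "\<forall>(c, sc)\<in>set I. length sc = fst c \<and> (\<forall>j\<in>set sc. j < N)
      \<and> real_C1 \<omega> op (fst c) (snd c) \<and> real_C2 \<omega> op (fst c) (snd c)"
    using I unfolding is_instance_def by fast
  then have "real_C1 \<omega> op N (inst_fun I) \<and> real_C2 \<omega> op N (inst_fun I)"
    by (rule inst_fun_induct[where P = "\<lambda>k F. real_C1 \<omega> op k F \<and> real_C2 \<omega> op k F"])
      (blast intro: real_C1_zero real_C2_zero real_C1_add real_C2_add real_C1_scope real_C2_scope)+
  then show ?thesis using real_C2_INF_suffix[OF le_N] f_eq by blast
qed

section \<open>Sink components of \<open>(\<G>, E)\<close>\<close>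

lemma Eset_iff: "(u, v) \<in> Eset \<omega> op \<longleftrightarrow> u \<in> Gset \<omega> op \<and> (\<exists>s\<in>set_pmf \<omega>. v = op s \<circ> u)"
  by (auto simp: Eset_def)

lemma Eset_subset_steps: "Eset \<omega> op \<subseteq> {(h, op s \<circ> h) | h s. s \<in> set_pmf \<omega>}"
  by (auto simp: Eset_def)

lemma rtrancl_Eset_Gset: "(u, v) \<in> (Eset \<omega> op)\<^sup>* \<Longrightarrow> u \<in> Gset \<omega> op \<Longrightarrow> v \<in> Gset \<omega> op"
  by (induction rule: rtrancl_induct) (auto simp: Eset_iff intro: Gset.step)

lemma rtrancl_Eset_comp:
  assumes "(u, v) \<in> (Eset \<omega> op)\<^sup>*"
  shows "\<exists>k\<in>Gset \<omega> op. v = k \<circ> u"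
  using assms
proof (induction rule: rtrancl_induct)
  case base
  then show ?case by (metis Gset.id_in id_comp)
next
  case (step v w)
  obtain k where k: "k \<in> Gset \<omega> op" "v = k \<circ> u" using step.IH by blast
  obtain s where s: "s \<in> set_pmf \<omega>" "w = op s \<circ> v" using step.hyps(2) by (auto simp: Eset_iff)
  then have "w = (op s \<circ> k) \<circ> u" using k(2) by (simp add: comp_assoc)
  then show ?case using Gset.step[OF k(1) s(1)] by blast
qed

definition sink_SCC :: "'s pmf \<Rightarrow> ('s \<Rightarrow> ('m \<Rightarrow> 'a) \<Rightarrow> ('m \<Rightarrow> 'a)) \<Rightarrow> (('m \<Rightarrow> 'a) \<Rightarrow> ('m \<Rightarrow> 'a)) set \<Rightarrow> bool"
  where "sink_SCC \<omega> op C \<longleftrightarrow> is_SCC (Gset \<omega> op) (Eset \<omega> op) C \<and>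
    (\<forall>(u, v) \<in> Eset \<omega> op. u \<in> C \<longrightarrow> v \<in> C)"

lemma mem_Gstar_iff: "h \<in> Gstar \<omega> op \<longleftrightarrow> (\<exists>C. sink_SCC \<omega> op C \<and> h \<in> C)"
  by (auto simp: Gstar_def sink_SCC_def)

lemma sink_SCC_step:
  assumes "sink_SCC \<omega> op C" "u \<in> C" "s \<in> set_pmf \<omega>"
  shows "op s \<circ> u \<in> C"
proof -
  have "u \<in> Gset \<omega> op" using assms(1,2) by (auto simp: sink_SCC_def is_SCC_def)
  then have "(u, op s \<circ> u) \<in> Eset \<omega> op" using assms(3) by (auto simp: Eset_iff)
  then show ?thesis using assms(1,2) by (auto simp: sink_SCC_def)
qed

lemma sink_SCC_comp:
  assumes "sink_SCC \<omega> op C" "h \<in> C" "g \<in> Gset \<omega> op"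
  shows "g \<circ> h \<in> C"
  using assms(3)
proof (induction rule: Gset.induct)
  case id_in
  then show ?case using assms(2) by simp
next
  case (step g s)
  have "op s \<circ> (g \<circ> h) \<in> C" using sink_SCC_step[OF assms(1) step.IH step.hyps(2)] .
  then show ?case by (simp only: comp_assoc)
qed

lemma Gstar_step: "u \<in> Gstar \<omega> op \<Longrightarrow> s \<in> set_pmf \<omega> \<Longrightarrow> op s \<circ> u \<in> Gstar \<omega> op"
  unfolding mem_Gstar_iff by (blast intro: sink_SCC_step)

lemma Gstar_subset_Gset: "Gstar \<omega> op \<subseteq> Gset \<omega> op"
  by (auto simp: Gstar_def is_SCC_def)

text \<open>The set reachable from a node whose reachable set has least cardinality is a sink SCC.\<close>

lemma Gstar_nonempty:
  fixes op :: "'s \<Rightarrow> ('m::finite \<Rightarrow> 'a::finite) \<Rightarrow> ('m \<Rightarrow> 'a)"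
  shows "Gstar \<omega> op \<noteq> {}"
proof -
  let ?E = "Eset \<omega> op" and ?G = "Gset \<omega> op"
  define reach where "reach u = {v. (u, v) \<in> ?E\<^sup>*}" for u
  obtain g where g: "g \<in> ?G" "\<And>h. h \<in> ?G \<Longrightarrow> card (reach g) \<le> card (reach h)"
    using ex_has_least_nat[of "\<lambda>h. h \<in> ?G" id "\<lambda>h. card (reach h)"] Gset.id_in by blast
  have sub: "reach g \<subseteq> ?G" using rtrancl_Eset_Gset g(1) by (auto simp: reach_def)
  have reach_back: "(u, g) \<in> ?E\<^sup>*" if "u \<in> reach g" for u
  proof -
    have "reach u \<subseteq> reach g" using that by (auto simp: reach_def)
    moreover have "card (reach g) \<le> card (reach u)" using g(2) sub that by auto
    ultimately have "reach u = reach g" by (simp add: card_seteq)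
    then show ?thesis by (auto simp: reach_def)
  qed
  have "sink_SCC \<omega> op (reach g)"
    unfolding sink_SCC_def is_SCC_def
  proof (intro conjI ballI impI)
    show "reach g \<noteq> {}" "reach g \<subseteq> ?G" using sub by (auto simp: reach_def)
    show "(u, v) \<in> ?E\<^sup>*" if "u \<in> reach g" "v \<in> reach g" for u v
      using reach_back[OF that(1)] that(2) by (auto simp: reach_def)
    show "v \<in> reach g" if "u \<in> reach g" "(u, v) \<in> ?E\<^sup>* \<and> (v, u) \<in> ?E\<^sup>*" for u v
      using that by (auto simp: reach_def)
    show "\<And>e. e \<in> ?E \<Longrightarrow> (case e of (u, v) \<Rightarrow> u \<in> reach g \<longrightarrow> v \<in> reach g)"
      by (auto simp: reach_def)
  qed
  moreover have "g \<in> reach g" by (simp add: reach_def)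
  ultimately have "g \<in> Gstar \<omega> op" unfolding mem_Gstar_iff by blast
  then show ?thesis by blast
qed

lemma in_dom_m_app_Gset:
  fixes op :: "'s \<Rightarrow> ('m::finite \<Rightarrow> 'a) \<Rightarrow> ('m \<Rightarrow> 'a)"
  assumes cl: "dom_closed \<omega> op n f" and dx: "in_dom_m n f x" and g: "g \<in> Gset \<omega> op"
  shows "in_dom_m n f (app n g x)"
  using g
proof (induction rule: Gset.induct)
  case id_in
  have "app n id x = x" using dx unfolding in_dom_m_def by (intro app_id) blast
  with dx show ?case by (simp only:)
next
  case (step g s)
  with cl have "in_dom_m n f (app n (op s) (app n g x))" unfolding dom_closed_def by blast
  then show ?case by (simp only: app_comp)
qed

lemma pmf_mean_le_min_imp_eq:
  fixes a :: "'s \<Rightarrow> real"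
  assumes fin: "finite (set_pmf \<omega>)" and ge: "\<And>s. s \<in> set_pmf \<omega> \<Longrightarrow> M \<le> a s"
    and le: "(\<Sum>s\<in>set_pmf \<omega>. pmf \<omega> s * a s) \<le> M" and s: "s \<in> set_pmf \<omega>"
  shows "a s = M"
proof -
  have nonneg: "\<forall>t\<in>set_pmf \<omega>. 0 \<le> pmf \<omega> t * (a t - M)" using ge by simp
  have "(\<Sum>t\<in>set_pmf \<omega>. pmf \<omega> t * (a t - M))
      = (\<Sum>t\<in>set_pmf \<omega>. pmf \<omega> t * a t) - (\<Sum>t\<in>set_pmf \<omega>. pmf \<omega> t) * M"
    by (simp add: right_diff_distrib sum_subtractf sum_distrib_right)
  also have "(\<Sum>t\<in>set_pmf \<omega>. pmf \<omega> t) = 1" using fin by (simp add: sum_pmf_eq_1)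
  finally have "(\<Sum>t\<in>set_pmf \<omega>. pmf \<omega> t * (a t - M)) \<le> 0" using le by simp
  moreover have "0 \<le> (\<Sum>t\<in>set_pmf \<omega>. pmf \<omega> t * (a t - M))"
    using nonneg by (intro sum_nonneg) blast
  ultimately have "(\<Sum>t\<in>set_pmf \<omega>. pmf \<omega> t * (a t - M)) = 0" by linarith
  then have "\<forall>t\<in>set_pmf \<omega>. pmf \<omega> t * (a t - M) = 0"
    by (subst sum_nonneg_eq_0_iff[OF fin, symmetric]) (use nonneg in auto)
  then have "pmf \<omega> s * (a s - M) = 0" using s by blast
  then show ?thesis using pmf_positive[OF s] by simp
qed

text \<open>Minimum principle: the minimum propagates along every transition.\<close>

lemma superharmonic_constant_on_class:
  fixes \<Phi> :: "'g \<Rightarrow> real" and T :: "'s \<Rightarrow> 'g \<Rightarrow> 'g"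
  assumes fin: "finite (set_pmf \<omega>)" "finite C"
    and closed: "\<And>h s. h \<in> C \<Longrightarrow> s \<in> set_pmf \<omega> \<Longrightarrow> T s h \<in> C"
    and conn: "\<And>u v. u \<in> C \<Longrightarrow> v \<in> C \<Longrightarrow> (u, v) \<in> {(h, T s h) | h s. s \<in> set_pmf \<omega>}\<^sup>*"
    and super: "\<And>h. h \<in> C \<Longrightarrow> (\<Sum>s\<in>set_pmf \<omega>. pmf \<omega> s * \<Phi> (T s h)) \<le> \<Phi> h"
    and u: "u \<in> C" and v: "v \<in> C"
  shows "\<Phi> u = \<Phi> v"
proof -
  define M where "M = Min (\<Phi> ` C)"
  have "M \<in> \<Phi> ` C" unfolding M_def using fin(2) u by (intro Min_in) auto
  then obtain h0 where h0: "h0 \<in> C" "\<Phi> h0 = M" by (metis imageE)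
  have M_le: "M \<le> \<Phi> h" if "h \<in> C" for h
    using fin(2) that unfolding M_def by simp
  have "h \<in> C \<and> \<Phi> h = M" if "(h0, h) \<in> {(h, T s h) | h s. s \<in> set_pmf \<omega>}\<^sup>*" for h
    using that
  proof (induction rule: rtrancl_induct)
    case base
    then show ?case using h0 by simp
  next
    case (step v w)
    obtain s where s: "s \<in> set_pmf \<omega>" "w = T s v" using step.hyps(2) by blast
    have "\<Phi> (T s v) = M"
    proof (rule pmf_mean_le_min_imp_eq[OF fin(1) _ _ s(1)])
      show "M \<le> \<Phi> (T t v)" if "t \<in> set_pmf \<omega>" for t
        using M_le[OF closed[OF _ that]] step.IH by simp
      show "(\<Sum>t\<in>set_pmf \<omega>. pmf \<omega> t * \<Phi> (T t v)) \<le> M"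
        using super[of v] step.IH by simp
    qed
    then show ?case using closed[OF _ s(1)] step.IH s(2) by simp
  qed
  then have "\<Phi> u = M" "\<Phi> v = M" using conn[OF h0(1) u] conn[OF h0(1) v] by simp_all
  then show ?thesis by simp
qed

lemma fm_Gset_invariant:
  fixes op :: "'s \<Rightarrow> ('m::finite \<Rightarrow> 'a::finite) \<Rightarrow> ('m \<Rightarrow> 'a)"
  assumes fin: "finite (set_pmf \<omega>)" and f: "real_C1 \<omega> op n f"
    and x: "x \<in> Range_n n (Gstar \<omega> op)" and dx: "in_dom_m n f x" and g: "g \<in> Gset \<omega> op"
  shows "fm f (app n g x) = fm f x"
proof -
  obtain h0 y where h0: "h0 \<in> Gstar \<omega> op" and x_eq: "x = app n h0 y"
    using x by (auto simp: Range_n_def)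
  obtain C where C: "sink_SCC \<omega> op C" "h0 \<in> C" using h0 mem_Gstar_iff by metis
  have nm: "no_minf_on n f" and cl: "dom_closed \<omega> op n f" using f by (auto simp: real_C1_def)
  have conn: "(u, v) \<in> (Eset \<omega> op)\<^sup>*" if "u \<in> C" "v \<in> C" for u v
    using C(1) that by (auto simp: sink_SCC_def is_SCC_def)
  have dom_C: "in_dom_m n f (app n h y)" if hC: "h \<in> C" for h
  proof -
    obtain k where "k \<in> Gset \<omega> op" "h = k \<circ> h0" using rtrancl_Eset_comp conn[OF C(2) hC] by blast
    then show ?thesis using in_dom_m_app_Gset[OF cl dx] x_eq by (simp add: app_comp)
  qed
  have gh0: "g \<circ> h0 \<in> C" using sink_SCC_comp[OF C g] .
  have "real_sum f (app n (g \<circ> h0) y) = real_sum f (app n h0 y)"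
  proof (rule superharmonic_constant_on_class[where T = "\<lambda>s h. op s \<circ> h" and \<Phi> = "\<lambda>h. real_sum f (app n h y)"])
    show "finite (set_pmf \<omega>)" "finite C" using fin by simp_all
    show "g \<circ> h0 \<in> C" "h0 \<in> C" using gh0 C(2) .
    show "op s \<circ> h \<in> C" if "h \<in> C" "s \<in> set_pmf \<omega>" for h s using sink_SCC_step[OF C(1)] that .
    show "(u, v) \<in> {(h, op s \<circ> h) | h s. s \<in> set_pmf \<omega>}\<^sup>*" if "u \<in> C" "v \<in> C" for u v
      using rtrancl_mono[OF Eset_subset_steps] conn[OF that] by blast
    show "(\<Sum>s\<in>set_pmf \<omega>. pmf \<omega> s * real_sum f (app n (op s \<circ> h) y)) \<le> real_sum f (app n h y)"
      if "h \<in> C" for h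
    proof -
      have "(\<Sum>s\<in>set_pmf \<omega>. pmf \<omega> s * real_sum f (app n (op s) (app n h y))) \<le> real_sum f (app n h y)"
        using f dom_C[OF that] by (simp add: real_C1_def)
      then show ?thesis by (simp only: app_comp)
    qed
  qed
  then have "fm f (app n (g \<circ> h0) y) = fm f (app n h0 y)"
    using fm_eq_real_sum[OF dom_C[OF gh0] nm] fm_eq_real_sum[OF dom_C[OF C(2)] nm] by simp
  then show ?thesis using x_eq by (simp only: app_comp)
qed

section \<open>Stationary distributions\<close>

definition transition_prob :: "'s pmf \<Rightarrow> ('s \<Rightarrow> 'g \<Rightarrow> 'g) \<Rightarrow> 'g \<Rightarrow> 'g \<Rightarrow> real" where
  "transition_prob \<omega> T g h = (\<Sum>s\<in>{s\<in>set_pmf \<omega>. T s g = h}. pmf \<omega> s)"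

lemma sum_transition_prob_mult:
  fixes T :: "'s \<Rightarrow> 'g::finite \<Rightarrow> 'g"
  assumes "finite (set_pmf \<omega>)"
  shows "(\<Sum>h\<in>UNIV. transition_prob \<omega> T g h * F h) = (\<Sum>s\<in>set_pmf \<omega>. pmf \<omega> s * F (T s g))"
proof -
  have "(\<Sum>h\<in>UNIV. transition_prob \<omega> T g h * F h)
      = (\<Sum>h\<in>UNIV. \<Sum>s\<in>{s\<in>set_pmf \<omega>. T s g = h}. pmf \<omega> s * F (T s g))"
    unfolding transition_prob_def sum_distrib_right by (intro sum.cong refl) auto
  also have "\<dots> = (\<Sum>s\<in>set_pmf \<omega>. pmf \<omega> s * F (T s g))"
    using sum.group[OF assms, of UNIV "\<lambda>s. T s g" "\<lambda>s. pmf \<omega> s * F (T s g)"] by simp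
  finally show ?thesis .
qed

lemma transition_prob_nonneg: "0 \<le> transition_prob \<omega> T g h"
  by (simp add: transition_prob_def sum_nonneg)

lemma transition_prob_leaving_closed:
  assumes "\<And>s. s \<in> set_pmf \<omega> \<Longrightarrow> T s g \<in> S" "h \<notin> S"
  shows "transition_prob \<omega> T g h = 0"
proof -
  have "{s\<in>set_pmf \<omega>. T s g = h} = {}" using assms by blast
  then show ?thesis unfolding transition_prob_def by (simp only: sum.empty)
qed

definition prob_vectors :: "'g set \<Rightarrow> (real^'g) set" where
  "prob_vectors S = {v. (\<forall>g. 0 \<le> v$g) \<and> (\<forall>g. g \<notin> S \<longrightarrow> v$g = 0) \<and> (\<Sum>g\<in>UNIV. v$g) = 1}"

lemma compact_prob_vectors: "compact (prob_vectors S)"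
proof -
  have "closed (prob_vectors S)"
    unfolding prob_vectors_def
    by (intro closed_Collect_conj closed_Collect_all closed_Collect_imp closed_Collect_le
        closed_Collect_eq continuous_intros) auto
  moreover have "bounded (prob_vectors S)"
    unfolding bounded_iff
  proof (intro exI ballI)
    fix v assume "v \<in> prob_vectors S"
    then have "(\<Sum>i\<in>UNIV. \<bar>v$i\<bar>) = 1" by (simp add: prob_vectors_def)
    then show "norm v \<le> 1" using norm_le_l1_cart[of v] by simp
  qed
  ultimately show ?thesis by (simp add: compact_eq_bounded_closed)
qed

lemma convex_prob_vectors: "convex (prob_vectors S)"
  unfolding convex_def prob_vectors_def
  by (auto simp: sum.distrib sum_distrib_left[symmetric] algebra_simps)

lemma prob_vectors_nonempty: "g \<in> S \<Longrightarrow> prob_vectors S \<noteq> {}"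
  by (auto simp: prob_vectors_def split: if_splits intro!: exI[of _ "\<chi> h. if h = g then 1 else 0"])

definition stationary :: "'s pmf \<Rightarrow> ('s \<Rightarrow> 'g \<Rightarrow> 'g) \<Rightarrow> 'g pmf \<Rightarrow> bool" where
  "stationary \<omega> T lam \<longleftrightarrow> (\<forall>h :: 'g \<Rightarrow> real.
     (\<Sum>g\<in>UNIV. pmf lam g * h g) = (\<Sum>g\<in>UNIV. pmf lam g * (\<Sum>s\<in>set_pmf \<omega>. pmf \<omega> s * h (T s g))))"

lemma transition_step_prob_vectors:
  fixes T :: "'s \<Rightarrow> 'g::finite \<Rightarrow> 'g"
  assumes fin: "finite (set_pmf \<omega>)"
    and closed: "\<And>g s. g \<in> S \<Longrightarrow> s \<in> set_pmf \<omega> \<Longrightarrow> T s g \<in> S"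
    and v: "v \<in> prob_vectors S"
  shows "(\<chi> h. \<Sum>g\<in>UNIV. v$g * transition_prob \<omega> T g h) \<in> prob_vectors S"
  unfolding prob_vectors_def
proof (intro CollectI conjI allI impI)
  let ?P = "transition_prob \<omega> T"
  show "0 \<le> (\<chi> h. \<Sum>g\<in>UNIV. v$g * ?P g h) $ h" for h
    using v by (auto simp: prob_vectors_def intro!: sum_nonneg mult_nonneg_nonneg transition_prob_nonneg)
  show "(\<chi> h. \<Sum>g\<in>UNIV. v$g * ?P g h) $ h = 0" if "h \<notin> S" for h
  proof -
    have no_exit: "v$g * ?P g h = 0" for g
      using v that closed transition_prob_leaving_closed[of \<omega> T g S h]
      by (cases "g \<in> S") (auto simp: prob_vectors_def)
    show ?thesis unfolding vec_lambda_beta by (simp only: no_exit sum.neutral_const)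
  qed
  have "(\<Sum>h\<in>UNIV. ?P g h) = 1" for g
    using sum_transition_prob_mult[OF fin, of T g "\<lambda>_. 1"] fin by (simp add: sum_pmf_eq_1)
  then have "(\<Sum>h\<in>UNIV. \<Sum>g\<in>UNIV. v$g * ?P g h) = (\<Sum>g\<in>UNIV. v$g)"
    by (subst sum.swap) (simp add: sum_distrib_left[symmetric])
  then show "(\<Sum>h\<in>UNIV. (\<chi> h. \<Sum>g\<in>UNIV. v$g * ?P g h) $ h) = 1"
    using v by (simp add: prob_vectors_def)
qed

lemma prob_vector_pmf:
  fixes v :: "real^'g::finite"
  assumes v: "v \<in> prob_vectors S"
  shows "\<exists>lam. set_pmf lam \<subseteq> S \<and> (\<forall>g. pmf lam g = v$g)"
proof -
  have nonneg: "0 \<le> v$g" for g using v by (simp add: prob_vectors_def)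
  have total: "(\<integral>\<^sup>+g. ennreal (v$g) \<partial>count_space UNIV) = 1"
    using v nonneg by (simp add: nn_integral_count_space_finite prob_vectors_def)
  have "set_pmf (embed_pmf (\<lambda>g. v$g)) = {g. v$g \<noteq> 0}"
    using set_embed_pmf[of "\<lambda>g. v$g", OF nonneg total] .
  then have "set_pmf (embed_pmf (\<lambda>g. v$g)) \<subseteq> S" using v by (auto simp: prob_vectors_def)
  moreover have "pmf (embed_pmf (\<lambda>g. v$g)) g = v$g" for g
    using pmf_embed_pmf[of "\<lambda>g. v$g", OF nonneg total] .
  ultimately show ?thesis by blast
qed

text \<open>A probability vector fixed by the transition matrix exists by Brouwer's theorem.\<close>

lemma stationary_exists:
  fixes T :: "'s \<Rightarrow> 'g::finite \<Rightarrow> 'g"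
  assumes fin: "finite (set_pmf \<omega>)" and "S \<noteq> {}"
    and closed: "\<And>g s. g \<in> S \<Longrightarrow> s \<in> set_pmf \<omega> \<Longrightarrow> T s g \<in> S"
  shows "\<exists>lam. set_pmf lam \<subseteq> S \<and> stationary \<omega> T lam"
proof -
  define P where "P = transition_prob \<omega> T"
  define step where "step v = (\<chi> h. \<Sum>g\<in>UNIV. v$g * P g h)" for v :: "real^'g"
  have maps: "step \<in> prob_vectors S \<rightarrow> prob_vectors S"
    unfolding step_def P_def using transition_step_prob_vectors[where T = T and S = S, OF fin closed] by blast
  have cont: "continuous_on (prob_vectors S) step"
    unfolding step_def by (intro continuous_intros)
  obtain g0 where "g0 \<in> S" using assms(2) by blast
  then have "prob_vectors S \<noteq> {}" by (rule prob_vectors_nonempty)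
  then obtain v where v: "v \<in> prob_vectors S" "step v = v"
    using brouwer[OF compact_prob_vectors convex_prob_vectors _ cont maps] by blast
  obtain lam where lam: "set_pmf lam \<subseteq> S" and pmf_lam: "\<And>g. pmf lam g = v$g"
    using prob_vector_pmf[OF v(1)] by blast
  have "stationary \<omega> T lam"
    unfolding stationary_def
  proof
    fix h :: "'g \<Rightarrow> real"
    have "(\<Sum>g\<in>UNIV. pmf lam g * h g) = (\<Sum>k\<in>UNIV. step v $ k * h k)"
      using v(2) by (simp add: pmf_lam)
    also have "\<dots> = (\<Sum>k\<in>UNIV. \<Sum>g\<in>UNIV. v$g * (P g k * h k))"
      unfolding step_def by (simp add: sum_distrib_right mult.assoc)
    also have "\<dots> = (\<Sum>g\<in>UNIV. v$g * (\<Sum>k\<in>UNIV. P g k * h k))"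
      by (subst sum.swap) (simp add: sum_distrib_left)
    also have "\<dots> = (\<Sum>g\<in>UNIV. pmf lam g * (\<Sum>s\<in>set_pmf \<omega>. pmf \<omega> s * h (T s g)))"
      by (simp add: P_def sum_transition_prob_mult[OF fin] pmf_lam)
    finally show "(\<Sum>g\<in>UNIV. pmf lam g * h g)
        = (\<Sum>g\<in>UNIV. pmf lam g * (\<Sum>s\<in>set_pmf \<omega>. pmf \<omega> s * h (T s g)))" .
  qed
  with lam show ?thesis by blast
qed

lemma mean_of_others_bound_imp_constant:
  fixes W :: "'m::finite \<Rightarrow> real"
  assumes m2: "CARD('m) \<ge> 2"
    and bound: "\<And>i. W i \<le> (\<Sum>j\<in>UNIV - {i}. W j) / real (CARD('m) - 1)"
  shows "W i = W j"
proof -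
  define total where "total = (\<Sum>k\<in>UNIV. W k)"
  have le: "W k * real CARD('m) \<le> total" for k
  proof -
    have "W k * real (CARD('m) - 1) \<le> (\<Sum>j\<in>UNIV - {k}. W j)"
      using bound[of k] m2 by (simp add: pos_le_divide_eq)
    moreover have "total = W k + (\<Sum>j\<in>UNIV - {k}. W j)"
      unfolding total_def by (simp add: sum.remove)
    ultimately show ?thesis using m2 by (simp add: of_nat_diff algebra_simps)
  qed
  have eq: "W k * real CARD('m) = total" for k
  proof (rule ccontr)
    assume "W k * real CARD('m) \<noteq> total"
    then have "W k * real CARD('m) < total" using le[of k] by simp
    then have "(\<Sum>l\<in>UNIV. W l * real CARD('m)) < (\<Sum>l\<in>(UNIV::'m set). total)"
      by (intro sum_strict_mono_ex1) (use le in auto)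
    then show False by (simp add: total_def sum_distrib_right[symmetric] mult.commute)
  qed
  then have "W i * real CARD('m) = W j * real CARD('m)" by simp
  then show ?thesis by simp
qed

lemma f_lambda_Gstar_eq:
  fixes op :: "'s \<Rightarrow> ('m::finite \<Rightarrow> 'a::finite) \<Rightarrow> ('m \<Rightarrow> 'a)"
  assumes lam: "set_pmf lam \<subseteq> Gstar \<omega> op" and f: "real_C1 \<omega> op n f" and dx: "in_dom_m n f x"
  shows "f_lambda lam (Gstar \<omega> op) n f i x
    = ereal (\<Sum>g\<in>UNIV. pmf lam g * real_of_ereal (f (app n g x i)))"
proof -
  let ?GS = "Gstar \<omega> op"
  have nm: "no_minf_on n f" and cl: "dom_closed \<omega> op n f" using f by (auto simp: real_C1_def)
  have "f (app n g x i) \<noteq> -\<infinity> \<and> f (app n g x i) < \<infinity>" if "g \<in> ?GS" for g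
    using in_dom_m_app_Gset[OF cl dx] Gstar_subset_Gset that nm
    by (auto simp: in_dom_m_def no_minf_on_def)
  then have "f_lambda lam ?GS n f i x = (\<Sum>g\<in>?GS. ereal (pmf lam g * real_of_ereal (f (app n g x i))))"
    unfolding f_lambda_def by (intro sum.cong refl) (simp add: ereal_mult_real_of_ereal_finite)
  also have "\<dots> = ereal (\<Sum>g\<in>?GS. pmf lam g * real_of_ereal (f (app n g x i)))"
    by simp
  also have "(\<Sum>g\<in>?GS. pmf lam g * real_of_ereal (f (app n g x i)))
      = (\<Sum>g\<in>UNIV. pmf lam g * real_of_ereal (f (app n g x i)))"
    using lam by (intro sum.mono_neutral_left) (auto simp: set_pmf_eq)
  finally show ?thesis .
qed

text \<open>Stationarity turns (C2) into the bound of \<open>mean_of_others_bound_imp_constant\<close> for the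
  labelwise averages.\<close>

lemma f_lambda_label_independent:
  fixes op :: "'s \<Rightarrow> ('m::finite \<Rightarrow> 'a::finite) \<Rightarrow> ('m \<Rightarrow> 'a)"
    and lam :: "(('m \<Rightarrow> 'a) \<Rightarrow> ('m \<Rightarrow> 'a)) pmf"
  assumes m2: "CARD('m) \<ge> 2" and lam: "set_pmf lam \<subseteq> Gstar \<omega> op"
    and st: "stationary \<omega> (\<lambda>s g. op s \<circ> g) lam"
    and f: "real_C1 \<omega> op n f" "real_C2 \<omega> op n f" and dx: "in_dom_m n f x"
  shows "f_lambda lam (Gstar \<omega> op) n f i' x = f_lambda lam (Gstar \<omega> op) n f i'' x"
proof -
  define r where "r g i = real_of_ereal (f (app n g x i))" for g i
  define W where "W i = (\<Sum>g\<in>UNIV. pmf lam g * r g i)" for i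
  have cl: "dom_closed \<omega> op n f" using f(1) by (simp add: real_C1_def)
  have "W i \<le> (\<Sum>j\<in>UNIV - {i}. W j) / real (CARD('m) - 1)" for i
  proof -
    have "W i = (\<Sum>g\<in>UNIV. pmf lam g * (\<Sum>s\<in>set_pmf \<omega>. pmf \<omega> s * r (op s \<circ> g) i))"
      using st unfolding W_def stationary_def by (rule spec[where x = "\<lambda>g. r g i"])
    also have "\<dots> \<le> (\<Sum>g\<in>UNIV. pmf lam g * ((\<Sum>j\<in>UNIV - {i}. r g j) / real (CARD('m) - 1)))"
    proof (rule sum_mono)
      fix g
      have "(\<Sum>s\<in>set_pmf \<omega>. pmf \<omega> s * r (op s \<circ> g) i) \<le> (\<Sum>j\<in>UNIV - {i}. r g j) / real (CARD('m) - 1)"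
        if "g \<in> set_pmf lam"
        using f(2) in_dom_m_app_Gset[OF cl dx] Gstar_subset_Gset lam that
        unfolding real_C2_def real_mean_others_def r_def
        by (simp only: app_comp[symmetric]) blast
      then show "pmf lam g * (\<Sum>s\<in>set_pmf \<omega>. pmf \<omega> s * r (op s \<circ> g) i)
          \<le> pmf lam g * ((\<Sum>j\<in>UNIV - {i}. r g j) / real (CARD('m) - 1))"
        by (cases "g \<in> set_pmf lam") (blast intro: mult_left_mono pmf_nonneg, simp add: set_pmf_eq)
    qed
    also have "\<dots> = (\<Sum>j\<in>UNIV - {i}. W j) / real (CARD('m) - 1)"
      unfolding W_def
      by (simp add: sum_divide_distrib sum_distrib_left sum.swap[of _ "UNIV - {i}"])
    finally show ?thesis .
  qed
  then have "W i' = W i''" by (rule mean_of_others_bound_imp_constant[OF m2])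
  then show ?thesis using f_lambda_Gstar_eq[OF lam f(1) dx] by (simp add: W_def r_def)
qed

theorem theorem5p4:
  fixes \<Gamma> :: "('a::finite) cost set"
    and \<omega> :: "'s pmf"
    and op :: "'s \<Rightarrow> ('m::finite \<Rightarrow> 'a) \<Rightarrow> ('m \<Rightarrow> 'a)"
  assumes m2: "CARD('m) \<ge> 2"
    and finGamma: "finite \<Gamma>"
    and valued: "\<forall>c\<in>\<Gamma>. valued_Q_inf c"
    and finsupp: "finite (set_pmf \<omega>)"
    and c1: "\<forall>c\<in>\<Gamma>. C1 \<omega> op c"
  shows "(\<forall>n f x g. expressible \<Gamma> n f \<longrightarrow> x \<in> Range_n n (Gstar \<omega> op) \<longrightarrow> in_dom_m n f x
            \<longrightarrow> g \<in> Gset \<omega> op \<longrightarrow> fm f (app n g x) = fm f x)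
       \<and> ((\<forall>c\<in>\<Gamma>. C2 \<omega> op c) \<longrightarrow>
          (\<exists>lam :: (('m \<Rightarrow> 'a) \<Rightarrow> ('m \<Rightarrow> 'a)) pmf. set_pmf lam \<subseteq> Gstar \<omega> op \<and>
             (\<forall>n f x. expressible \<Gamma> n f \<longrightarrow> x \<in> Range_n n (Gstar \<omega> op) \<longrightarrow> in_dom_m n f x
                \<longrightarrow> (\<forall>i' i''. f_lambda lam (Gstar \<omega> op) n f i' x = f_lambda lam (Gstar \<omega> op) n f i'' x))))"
proof (intro conjI impI allI)
  fix n f x g
  assume "expressible \<Gamma> n f" "x \<in> Range_n n (Gstar \<omega> op)" "in_dom_m n f x" "g \<in> Gset \<omega> op"
  then show "fm f (app n g x) = fm f x"
    using fm_Gset_invariant expressible_real_C1 finsupp valued c1 by blast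
next
  assume c2: "\<forall>c\<in>\<Gamma>. C2 \<omega> op c"
  obtain lam where lam: "set_pmf lam \<subseteq> Gstar \<omega> op" "stationary \<omega> (\<lambda>s g. op s \<circ> g) lam"
    using stationary_exists[where T = "\<lambda>s g. op s \<circ> g", OF finsupp Gstar_nonempty Gstar_step] by blast
  have "f_lambda lam (Gstar \<omega> op) n f i' x = f_lambda lam (Gstar \<omega> op) n f i'' x"
    if "expressible \<Gamma> n f" "in_dom_m n f x" for n f x i' i''
    using f_lambda_label_independent[OF m2 lam] expressible_real_C1[OF finsupp valued c1]
      expressible_real_C2[OF finsupp valued c1 c2] that by blast
  then show "\<exists>lam. set_pmf lam \<subseteq> Gstar \<omega> op \<and> (\<forall>n f x. expressible \<Gamma> n f \<longrightarrow>
      x \<in> Range_n n (Gstar \<omega> op) \<longrightarrow> in_dom_m n f x \<longrightarrow>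
      (\<forall>i' i''. f_lambda lam (Gstar \<omega> op) n f i' x = f_lambda lam (Gstar \<omega> op) n f i'' x))"
    using lam(1) by blast
qed

end
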